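(* Let $\mathbb{D}$ be a division ring, let $2\le m,n<\infty$, let $P$ be an $n\times m$ matrix over $\mathbb{D}$ with $\operatorname{rank}P=r$, and let $\mathcal{A}=\mathfrak{M}(\mathbb{D}, m, n, P)$. If $r=\min\{m,n\}$, then $\mathcal{A}=\sum^2[\mathcal{A},\mathcal{A}][\mathcal{A},\mathcal{A}]$; that is, $\xi(\mathcal{A})\le 2$.
   Context: $\mathfrak{M}(\mathbb{D}, m, n, P)$ denotes the ring of all $m\times n$ matrices over the division ring $\mathbb{D}$ with entrywise addition and multiplication $A\bullet B = APB$. The commutator is $[x,y]=x\bullet y-y\bullet x$; $[X,Y]=\{[x,y]:x\in X,y\in Y\}$, $XY=\{x\bullet y:x\in X,y\in Y\}$, and $\sum^N S$ denotes the set of sums of $N$ elements of $S$. For a ring $\mathbb{R}$ for which some $N\in\mathbb{N}$ satisfies $\mathbb{R}=\sum^N[\mathbb{R},\mathbb{R}][\mathbb{R},\mathbb{R}]$, $\xi(\mathbb{R})$ is the least such $N$. *)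

theory Defs
  imports "HOL-Analysis.Finite_Cartesian_Product"
begin

text \<open>Matrices over a division ring: an n x m matrix is of type 'a^'m^'n
  (rows indexed by 'n). Dimensions are CARD of the finite index types.\<close>

definition left_indep_rows :: "('a::division_ring)^'m^'n \<Rightarrow> 'n set \<Rightarrow> bool" where
  "left_indep_rows P S \<longleftrightarrow>
     (\<forall>c. (\<Sum>i\<in>S. c i *s (P $ i)) = 0 \<longrightarrow> (\<forall>i\<in>S. c i = 0))"

definition drank :: "('a::division_ring)^'m^'n \<Rightarrow> nat" where
  "drank P = Max {card S | S. left_indep_rows P S}"

text \<open>The product of the ring M(D,m,n,P): A \<bullet> B = A P B.\<close>
definition sprod :: "('a::division_ring)^'m^'n \<Rightarrow> 'a^'n^'m \<Rightarrow> 'a^'n^'m \<Rightarrow> 'a^'n^'m" where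
  "sprod P A B = A ** P ** B"

definition scomm :: "('a::division_ring)^'m^'n \<Rightarrow> 'a^'n^'m \<Rightarrow> 'a^'n^'m \<Rightarrow> 'a^'n^'m" where
  "scomm P x y = sprod P x y - sprod P y x"

definition comm_set :: "('a::division_ring)^'m^'n \<Rightarrow> ('a^'n^'m) set" where
  "comm_set P = {scomm P x y | x y. True}"

definition prod_set :: "('a::division_ring)^'m^'n \<Rightarrow> ('a^'n^'m) set \<Rightarrow> ('a^'n^'m) set \<Rightarrow> ('a^'n^'m) set" where
  "prod_set P X Y = {sprod P x y | x y. x \<in> X \<and> y \<in> Y}"

definition sumN :: "nat \<Rightarrow> ('b::comm_monoid_add) set \<Rightarrow> 'b set" where
  "sumN N S = {(\<Sum>i<N. f i) | f. \<forall>i<N. f i \<in> S}"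

end

theory Submission
  imports Defs
begin

text \<open>
  Since \<open>rank P = min m n\<close>, the matrix \<open>P\<close> has a one-sided inverse: \<open>Q P = 1\<close>
  if \<open>m \<le> n\<close> and \<open>P R = 1\<close> if \<open>n \<le> m\<close>. Say \<open>Q P = 1\<close>. Then \<open>a \<mapsto> a Q\<close> embeds the
  square matrices \<open>M\<^sub>m(D)\<close> into \<open>\<A>\<close>, and every \<open>A\<close> splits as
  \<open>A = (A P) Q + L\<close> with \<open>L P = 0\<close>. It therefore suffices to write every square
  matrix \<open>X\<close> as \<open>u\<^sub>1 [c, y\<^sub>1] + u\<^sub>2 [c, y\<^sub>2]\<close> with commutators \<open>u\<^sub>i\<close>, an invertible
  \<open>c\<close> and \<open>u\<^sub>1 s\<^sub>1 + u\<^sub>2 s\<^sub>2 = 1\<close>: the part \<open>L = u\<^sub>1 s\<^sub>1 L + u\<^sub>2 s\<^sub>2 L\<close> is absorbed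
  into the second factors \<open>[c Q, y\<^sub>i Q + c\<^sup>-\<^sup>1 s\<^sub>i L]\<close>.

  Take \<open>c\<close> the cyclic permutation matrix. A matrix is a commutator \<open>[c, y]\<close> iff
  all its sums along cyclic diagonals vanish, since \<open>[c, -]\<close> acts on each diagonal
  as a difference operator. With \<open>u\<^sub>1 = E\<^sub>0\<^sub>1 = [E\<^sub>0\<^sub>0, E\<^sub>0\<^sub>1]\<close> and
  \<open>u\<^sub>2 = N\<^sup>T = [diag(0, 1, \<dots>), N\<^sup>T]\<close> (\<open>N\<close> the nilpotent shift) we have
  \<open>E\<^sub>0\<^sub>1 E\<^sub>1\<^sub>0 + N\<^sup>T N = 1\<close>, and each \<open>u\<^sub>i W\<close> ignores one row of \<open>W\<close>; that row
  is used to cancel the diagonal sums. The case \<open>P R = 1\<close> is the mirror image,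
  obtained by transposition.
\<close>

lemma vector_matrix_mult_eq_sum_rows:
  "x v* (A :: 'a::semiring_1^'m^'n) = (\<Sum>i\<in>UNIV. x $ i *s A $ i)"
  by (simp add: vector_matrix_mult_def vec_eq_iff sum_component)

lemma vector_matrix_mult_smult:
  "(c *s x) v* (A :: 'a::semiring_1^'m^'n) = c *s (x v* A)"
  by (simp add: vector_matrix_mult_def vec_eq_iff sum_distrib_left mult.assoc)

lemma matrix_matrix_mult_row: "(A ** B) $ i = A $ i v* B"
  by (simp add: matrix_matrix_mult_def vector_matrix_mult_def vec_eq_iff)

lemma mat_1_row: "(mat 1 :: 'a::zero_neq_one^'n^'n) $ i = axis i 1"
  by (simp add: mat_def axis_def vec_eq_iff eq_commute)

lemma sum_mult_delta_left:
  "(\<Sum>w\<in>UNIV. (if w = a then 1 else 0) * (f w :: 'a::semiring_1)) = f (a :: 'k::finite)"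
  by (simp add: of_bool_def[symmetric])

lemma sum_mult_delta_right:
  "(\<Sum>w\<in>UNIV. (f w :: 'a::semiring_1) * (if w = a then 1 else 0)) = f (a :: 'k::finite)"
  by (simp add: of_bool_def[symmetric])

lemma matrix_add_rdistrib: "((A :: 'a::semiring_1^'n^'m) + B) ** C = A ** C + B ** C"
  by (simp add: matrix_matrix_mult_def vec_eq_iff sum.distrib distrib_right)

lemma matrix_diff_ldistrib: "(A :: 'a::ring_1^'n^'m) ** (B - C) = A ** B - A ** C"
  by (simp add: matrix_matrix_mult_def vec_eq_iff sum_subtractf right_diff_distrib)

lemma matrix_diff_rdistrib: "((A :: 'a::ring_1^'n^'m) - B) ** C = A ** C - B ** C"
  by (simp add: matrix_matrix_mult_def vec_eq_iff sum_subtractf left_diff_distrib)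

lemma transpose_add: "transpose (A + B) = transpose A + transpose B"
  by (simp add: transpose_def vec_eq_iff)

lemma transpose_diff: "transpose (A - B) = transpose A - transpose B"
  by (simp add: transpose_def vec_eq_iff)

lemma transpose_matrix_mult_commuting:
  assumes "\<And>i k j. A $ i $ k * B $ k $ j = B $ k $ j * A $ i $ k"
  shows "transpose (A ** B) = transpose B ** transpose A"
  using assms by (simp add: matrix_matrix_mult_def transpose_def vec_eq_iff)

lemma matrix_mult_zero_column_cong:
  assumes "\<And>x. A $ x $ r = 0" and "\<And>x z. x \<noteq> r \<Longrightarrow> W $ x $ z = V $ x $ z"
  shows "A ** W = A ** V"
proof -
  have "A $ x $ w * W $ w $ z = A $ x $ w * V $ w $ z" for x w z
    using assms by (cases "w = r") auto
  then show ?thesis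
    by (simp add: vec_eq_iff matrix_matrix_mult_def)
qed

section \<open>One-sided inverses of matrices of full rank\<close>

lemma left_linear_system_nontrivial_solution:
  fixes v :: "'i \<Rightarrow> 'j \<Rightarrow> 'a::division_ring"
  assumes "finite J" "finite I" "card J < card I"
  shows "\<exists>c. (\<exists>i\<in>I. c i \<noteq> 0) \<and> (\<forall>j\<in>J. (\<Sum>i\<in>I. c i * v i j) = 0)"
  using assms
proof (induction J arbitrary: I v rule: finite_induct)
  case empty
  then obtain i where "i \<in> I" by fastforce
  then show ?case by (intro exI[of _ "\<lambda>x. if x = i then 1 else 0"]) auto
next
  case (insert a J)
  show ?case
  proof (cases "\<forall>i\<in>I. v i a = 0")
    case True
    with insert show ?thesis by fastforce
  next
    case False
    then obtain i0 where i0: "i0 \<in> I" "v i0 a \<noteq> 0" by blast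
    define w where "w i j = v i j - v i a * inverse (v i0 a) * v i0 j" for i j
    have "card J < card (I - {i0})" using insert i0 by simp
    with insert.IH[of "I - {i0}" w] insert.prems obtain c' where
      c': "\<exists>i\<in>I - {i0}. c' i \<noteq> 0" "\<forall>j\<in>J. (\<Sum>i\<in>I - {i0}. c' i * w i j) = 0"
      by auto
    define c where
      "c i = (if i = i0 then - (\<Sum>i\<in>I - {i0}. c' i * v i a) * inverse (v i0 a) else c' i)" for i
    have "(\<Sum>i\<in>I. c i * v i j) = (\<Sum>i\<in>I - {i0}. c' i * w i j)" for j
    proof -
      have "(\<Sum>i\<in>I. c i * v i j) = c i0 * v i0 j + (\<Sum>i\<in>I - {i0}. c' i * v i j)"
        using i0 insert.prems by (simp add: sum.remove c_def)
      also have "c i0 * v i0 j = - (\<Sum>i\<in>I - {i0}. c' i * v i a * inverse (v i0 a) * v i0 j)"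
        by (simp add: c_def sum_distrib_right mult.assoc)
      finally show ?thesis
        by (simp add: w_def right_diff_distrib sum_subtractf mult.assoc)
    qed
    moreover have "w i a = 0" for i
      using i0(2) by (simp add: w_def mult.assoc)
    ultimately show ?thesis
      using c' by (intro exI[of _ c]) (auto simp: c_def)
  qed
qed

lemma card_le_if_left_indep_rows:
  fixes P :: "'a::division_ring^'m^'n"
  assumes "left_indep_rows P S"
  shows "card S \<le> CARD('m)"
proof (rule ccontr)
  assume "\<not> card S \<le> CARD('m)"
  then obtain c where c: "\<exists>i\<in>S. c i \<noteq> 0" "\<forall>j. (\<Sum>i\<in>S. c i * P $ i $ j) = 0"
    using left_linear_system_nontrivial_solution[of UNIV S "\<lambda>i j. P $ i $ j"] by auto
  then have "(\<Sum>i\<in>S. c i *s P $ i) = 0"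
    by (simp add: vec_eq_iff sum_component)
  with assms c(1) show False
    unfolding left_indep_rows_def by blast
qed

definition row_space_disjoint_coords :: "('a::division_ring)^'m^'n \<Rightarrow> 'm set \<Rightarrow> bool" where
  "row_space_disjoint_coords P E \<longleftrightarrow>
     (\<forall>x y. (\<forall>l\<in>-E. y $ l = 0) \<longrightarrow> x v* P + y = 0 \<longrightarrow> x v* P = 0)"

lemma row_space_disjoint_coords_extend:
  fixes P :: "'a::division_ring^'m^'n"
  assumes E: "row_space_disjoint_coords P E"
    and not_E': "\<not> row_space_disjoint_coords P (insert j E)"
  shows "\<exists>g h. (\<forall>l\<in>-E. h $ l = 0) \<and> g v* P + h = axis j 1"
proof -
  obtain x y where y: "\<forall>l\<in>- insert j E. y $ l = 0" "x v* P + y = 0" "x v* P \<noteq> 0"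
    using not_E' unfolding row_space_disjoint_coords_def by blast
  define y' where "y' = y - y $ j *s axis j 1"
  have y'E: "\<forall>l\<in>-E. y' $ l = 0"
    using y(1) by (auto simp: y'_def axis_def)
  have eq: "x v* P + y' = - (y $ j *s axis j 1)"
    using y(2) by (simp add: y'_def algebra_simps)
  have "y $ j \<noteq> 0"
  proof
    assume "y $ j = 0"
    with eq have "x v* P + y' = 0"
      by simp
    with E y'E y(3) show False
      unfolding row_space_disjoint_coords_def by blast
  qed
  define c where "c = - inverse (y $ j)"
  have "(c *s x) v* P + c *s y' = c *s (x v* P + y')"
    by (simp add: vector_matrix_mult_smult vector_add_ldistrib)
  also have "\<dots> = axis j 1"
    using \<open>y $ j \<noteq> 0\<close>
    by (simp add: eq c_def vector_smult_assoc vector_smult_rneg vector_smult_lneg)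
  finally show ?thesis
    using y'E by (intro exI[of _ "c *s x"] exI[of _ "c *s y'"]) simp
qed

lemma row_space_coordinate_complement:
  fixes P :: "'a::division_ring^'m^'n"
  obtains E :: "'m set" and G :: "'a^'n^'m" and H :: "'a^'m^'m"
  where "row_space_disjoint_coords P E" and "G ** P + H = mat 1"
    and "\<forall>j. \<forall>l\<in>-E. H $ j $ l = 0"
proof -
  have "row_space_disjoint_coords P {}"
    by (simp add: row_space_disjoint_coords_def vec_eq_iff)
  moreover have "\<forall>E. row_space_disjoint_coords P E \<longrightarrow> card E < CARD('m) + 1"
    by (simp add: card_mono le_imp_less_Suc)
  ultimately obtain E where E: "row_space_disjoint_coords P E"
    and max: "\<And>E'. row_space_disjoint_coords P E' \<Longrightarrow> card E' \<le> card E"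
    using ex_has_greatest_nat[of "row_space_disjoint_coords P" "{}" card "CARD('m) + 1"] by blast
  have "\<exists>g h. (\<forall>l\<in>-E. h $ l = 0) \<and> g v* P + h = axis j 1" for j
  proof (cases "j \<in> E")
    case True
    then show ?thesis
      by (intro exI[of _ 0] exI[of _ "axis j 1"]) (auto simp: axis_def vector_matrix_mult_eq_sum_rows)
  next
    case False
    then have "\<not> row_space_disjoint_coords P (insert j E)"
      using max[of "insert j E"] by fastforce
    with E show ?thesis
      by (rule row_space_disjoint_coords_extend)
  qed
  then obtain g h where gh: "\<And>j. (\<forall>l\<in>-E. h j $ l = 0) \<and> g j v* P + h j = axis j 1"
    by metis
  have "(\<chi> j. g j) ** P + (\<chi> j. h j) = mat 1"
    by (simp add: vec_eq_iff matrix_matrix_mult_row mat_1_row gh)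
  with E gh show ?thesis
    by (intro that[of E "\<chi> j. g j" "\<chi> j. h j"]) simp_all
qed

lemma card_add_le_if_row_space_disjoint_coords:
  fixes P :: "'a::division_ring^'m^'n"
  assumes indep: "left_indep_rows P S" and disj: "row_space_disjoint_coords P E"
  shows "card S + card E \<le> CARD('m)"
proof -
  define B :: "'a^'m^('n + 'm)" where
    "B = (\<chi> k. case k of Inl i \<Rightarrow> P $ i | Inr l \<Rightarrow> axis l 1)"
  have "left_indep_rows B (Inl ` S \<union> Inr ` E)"
    unfolding left_indep_rows_def
  proof (intro allI impI)
    fix c
    assume "(\<Sum>k\<in>Inl ` S \<union> Inr ` E. c k *s B $ k) = 0"
    then have sum0: "(\<Sum>i\<in>S. c (Inl i) *s P $ i) + (\<Sum>l\<in>E. c (Inr l) *s axis l 1) = 0"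
      by (subst (asm) sum.union_disjoint) (auto simp: sum.reindex B_def)
    define x where "x = (\<chi> i. if i \<in> S then c (Inl i) else 0)"
    define y where "y = (\<chi> l. if l \<in> E then c (Inr l) else 0)"
    have x: "x v* P = (\<Sum>i\<in>S. c (Inl i) *s P $ i)"
      by (auto simp: x_def vector_matrix_mult_eq_sum_rows intro!: sum.mono_neutral_cong_right)
    have "y = (\<Sum>l\<in>E. c (Inr l) *s axis l 1)"
      by (simp add: y_def vec_eq_iff sum_component axis_def if_distrib[of "\<lambda>a. _ * a"] cong: if_cong)
    with x sum0 have "x v* P + y = 0"
      by simp
    moreover have "\<forall>l\<in>-E. y $ l = 0"
      by (simp add: y_def)
    ultimately have "x v* P = 0"
      using disj unfolding row_space_disjoint_coords_def by blast
    with \<open>x v* P + y = 0\<close> x have "(\<Sum>i\<in>S. c (Inl i) *s P $ i) = 0" and "y = 0"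
      by simp_all
    have "\<forall>i\<in>S. c (Inl i) = 0"
      using indep[unfolded left_indep_rows_def, THEN spec, of "\<lambda>i. c (Inl i)"]
        \<open>(\<Sum>i\<in>S. c (Inl i) *s P $ i) = 0\<close> by blast
    moreover have "\<forall>l\<in>E. c (Inr l) = 0"
      using \<open>y = 0\<close> by (simp add: y_def vec_eq_iff) (metis (full_types))
    ultimately show "\<forall>k\<in>Inl ` S \<union> Inr ` E. c k = 0"
      by blast
  qed
  then have "card (Inl ` S \<union> Inr ` E) \<le> CARD('m)"
    by (rule card_le_if_left_indep_rows)
  then show ?thesis
    by (subst (asm) card_Un_disjoint) (auto simp: card_image)
qed

lemma right_inverse_if_left_indep_rows:
  fixes P :: "'a::division_ring^'m^'n"
  assumes "left_indep_rows P UNIV"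
  shows "\<exists>R. P ** R = mat 1"
proof -
  have indep: "x = 0" if "x v* P = 0" for x
    using assms that unfolding left_indep_rows_def vector_matrix_mult_eq_sum_rows
    by (simp add: vec_eq_iff)
  obtain E and G :: "'a^'n^'m" and H :: "'a^'m^'m" where disj: "row_space_disjoint_coords P E"
    and GH: "G ** P + H = mat 1" and H: "\<forall>j. \<forall>l\<in>-E. H $ j $ l = 0"
    by (rule row_space_coordinate_complement)
  have "(P ** G) $ i = mat 1 $ i" for i
  proof -
    have "P = P ** (G ** P + H)"
      by (simp add: GH)
    also have "\<dots> = (P ** G) ** P + P ** H"
      by (simp only: matrix_add_ldistrib matrix_mul_assoc)
    finally have "P $ i = (P ** G) $ i v* P + (P ** H) $ i"
      by (metis matrix_matrix_mult_row vector_add_component)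
    moreover have "P $ i = mat 1 $ i v* P"
      by (metis matrix_matrix_mult_row matrix_mul_lid)
    ultimately have "((P ** G) $ i - mat 1 $ i) v* P + (P ** H) $ i = 0"
      by (simp add: vector_matrix_mult_diff_distrib)
    moreover have "\<forall>l\<in>-E. (P ** H) $ i $ l = 0"
      using H by (simp add: matrix_matrix_mult_def)
    ultimately show ?thesis
      using disj indep unfolding row_space_disjoint_coords_def by fastforce
  qed
  then show ?thesis
    by (metis vec_eq_iff)
qed

lemma left_inverse_if_left_indep_rows:
  fixes P :: "'a::division_ring^'m^'n"
  assumes "left_indep_rows P S" and "card S = CARD('m)"
  shows "\<exists>Q. Q ** P = mat 1"
proof -
  obtain E and G :: "'a^'n^'m" and H :: "'a^'m^'m" where disj: "row_space_disjoint_coords P E"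
    and GH: "G ** P + H = mat 1" and H: "\<forall>j. \<forall>l\<in>-E. H $ j $ l = 0"
    by (rule row_space_coordinate_complement)
  have "E = {}"
    using card_add_le_if_row_space_disjoint_coords[OF assms(1) disj] assms(2) by simp
  with H have "H = 0"
    by (simp add: vec_eq_iff)
  with GH show ?thesis
    by auto
qed

lemma drank_attained:
  fixes P :: "'a::division_ring^'m^'n"
  shows "\<exists>S. left_indep_rows P S \<and> card S = drank P"
proof -
  have "{card S | S. left_indep_rows P S} = card ` {S. left_indep_rows P S}"
    by auto
  moreover have "left_indep_rows P {}"
    by (simp add: left_indep_rows_def)
  ultimately have "drank P \<in> {card S | S. left_indep_rows P S}"
    unfolding drank_def by (intro Max_in) auto
  then show ?thesis
    by auto
qed

section \<open>A cyclic order on a finite type\<close>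

definition enum_at :: "nat \<Rightarrow> 'k::finite" where
  "enum_at = (SOME h. bij_betw h {..<CARD('k)} UNIV)"

definition enum_pos :: "'k::finite \<Rightarrow> nat" where
  "enum_pos = inv_into {..<CARD('k)} enum_at"

lemma bij_betw_enum_at: "bij_betw (enum_at :: nat \<Rightarrow> 'k::finite) {..<CARD('k)} UNIV"
proof -
  have "\<exists>h. bij_betw h {..<CARD('k)} (UNIV :: 'k set)"
    using ex_bij_betw_nat_finite[of "UNIV :: 'k set"] by (simp add: atLeast0LessThan)
  then show ?thesis
    unfolding enum_at_def by (rule someI_ex)
qed

lemma enum_pos_less: "enum_pos (x :: 'k::finite) < CARD('k)"
  using bij_betw_enum_at[where 'k='k] bij_betw_inv_into unfolding enum_pos_def bij_betw_def
  by (metis inv_into_into lessThan_iff UNIV_I)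

lemma enum_at_pos [simp]: "enum_at (enum_pos x) = (x :: 'k::finite)"
  using bij_betw_enum_at[where 'k='k] unfolding enum_pos_def bij_betw_def
  by (simp add: f_inv_into_f)

lemma enum_pos_at [simp]: "i < CARD('k::finite) \<Longrightarrow> enum_pos (enum_at i :: 'k) = i"
  using bij_betw_enum_at[where 'k='k] unfolding enum_pos_def bij_betw_def
  by (simp add: inv_into_f_f)

lemma enum_pos_inject: "enum_pos (x :: 'k::finite) = enum_pos y \<longleftrightarrow> x = y"
  by (metis enum_at_pos)

lemma sum_UNIV_enum: "(\<Sum>x\<in>UNIV. f x) = (\<Sum>l<CARD('k::finite). f (enum_at l :: 'k))"
  using sum.reindex_bij_betw[OF bij_betw_enum_at, of f] by simp

definition rot :: "nat \<Rightarrow> 'k::finite \<Rightarrow> 'k" where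
  "rot d x = enum_at ((enum_pos x + d) mod CARD('k))"

lemma enum_pos_rot: "enum_pos (rot d (x :: 'k::finite)) = (enum_pos x + d) mod CARD('k)"
  by (simp add: rot_def)

lemma rot_rot: "rot d (rot e x) = rot (e + d) x"
  by (simp add: rot_def mod_add_left_eq add.assoc)

lemma rot_card [simp]: "rot CARD('k) x = (x :: 'k::finite)"
  by (simp add: rot_def enum_pos_less)

definition cyc_succ :: "'k::finite \<Rightarrow> 'k" where
  "cyc_succ = rot 1"

definition cyc_pred :: "'k::finite \<Rightarrow> 'k" where
  "cyc_pred = rot (CARD('k) - 1)"

lemma cyc_succ_pred [simp]: "cyc_succ (cyc_pred x) = (x :: 'k::finite)"
  by (simp add: cyc_succ_def cyc_pred_def rot_rot)

lemma cyc_pred_succ [simp]: "cyc_pred (cyc_succ x) = (x :: 'k::finite)"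
  by (simp add: cyc_succ_def cyc_pred_def rot_rot)

lemma cyc_succ_eq_iff: "cyc_succ w = z \<longleftrightarrow> w = cyc_pred (z :: 'k::finite)"
  by auto

lemma cyc_succ_inject [simp]: "cyc_succ x = cyc_succ z \<longleftrightarrow> x = (z :: 'k::finite)"
  by (metis cyc_succ_eq_iff)

definition cyc_diag :: "'k::finite \<Rightarrow> 'k \<Rightarrow> nat" where
  "cyc_diag x z = (enum_pos z + CARD('k) - enum_pos x) mod CARD('k)"

lemma cyc_diag_less: "cyc_diag x (z :: 'k::finite) < CARD('k)"
  by (simp add: cyc_diag_def)

lemma rot_cyc_diag: "rot (cyc_diag x z) x = (z :: 'k::finite)"
proof -
  have "(enum_pos x + (enum_pos z + CARD('k) - enum_pos x) mod CARD('k)) mod CARD('k) = enum_pos z"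
    using enum_pos_less[of x] enum_pos_less[of z] by (simp add: mod_add_right_eq add.commute)
  then show ?thesis
    by (simp add: rot_def cyc_diag_def)
qed

lemma cyc_diag_unique:
  assumes "d < CARD('k)" "rot d x = (z :: 'k::finite)"
  shows "cyc_diag x z = d"
proof -
  have "enum_pos z = (enum_pos x + d) mod CARD('k)"
    using assms(2) by (auto simp: enum_pos_rot)
  then show ?thesis
    using assms(1) enum_pos_less[of x] unfolding cyc_diag_def
    by (cases "enum_pos x + d < CARD('k)") (auto simp: le_mod_geq)
qed

lemma cyc_diag_rot: "d < CARD('k) \<Longrightarrow> cyc_diag x (rot d x) = d" for x :: "'k::finite"
  by (simp add: cyc_diag_unique)

lemma cyc_diag_cyc_succ: "cyc_diag (cyc_succ x) (cyc_succ z) = cyc_diag x z"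
  unfolding cyc_succ_def by (metis cyc_diag_less cyc_diag_unique rot_cyc_diag rot_rot add.commute)

lemma enum_at_0_neq_1: "2 \<le> CARD('k::finite) \<Longrightarrow> enum_at 0 \<noteq> (enum_at 1 :: 'k)"
  using enum_pos_at[of 0, where 'k='k] enum_pos_at[of 1, where 'k='k] by force

section \<open>Products of commutators of square matrices\<close>

definition mcomm :: "'a::ring_1^'k^'k \<Rightarrow> 'a^'k^'k \<Rightarrow> 'a^'k^'k" where
  "mcomm a b = a ** b - b ** a"

definition cyc_shift :: "'a::ring_1^'k^'k::finite" where
  "cyc_shift = (\<chi> x z. if z = cyc_succ x then 1 else 0)"

lemma cyc_shift_mult: "(cyc_shift ** Y) $ x $ z = Y $ cyc_succ x $ z"
  by (simp add: cyc_shift_def matrix_matrix_mult_def sum_mult_delta_left)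

lemma mult_cyc_shift: "(Y ** cyc_shift) $ x $ z = Y $ x $ cyc_pred z"
  by (simp add: cyc_shift_def matrix_matrix_mult_def eq_commute[of z] cyc_succ_eq_iff
      sum_mult_delta_right)

lemma cyc_shift_transpose: "cyc_shift ** transpose cyc_shift = mat 1"
  by (simp add: vec_eq_iff cyc_shift_mult) (simp add: transpose_def cyc_shift_def mat_def)

definition cyc_diag_sum :: "nat \<Rightarrow> 'a::ring_1^'k^'k::finite \<Rightarrow> 'a" where
  "cyc_diag_sum d Z = (\<Sum>x\<in>UNIV. Z $ x $ rot d x)"

lemma commutator_cyc_shift_surj:
  fixes Z :: "'a::ring_1^'k^'k::finite"
  assumes "\<forall>d<CARD('k). cyc_diag_sum d Z = 0"
  shows "\<exists>Y. mcomm cyc_shift Y = Z"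
proof -
  text \<open>On each cyclic diagonal \<open>mcomm cyc_shift\<close> acts as a difference operator,
    so \<open>Y\<close> is made of partial sums of the diagonals of \<open>Z\<close>.\<close>
  define Y :: "'a^'k^'k" where
    "Y = (\<chi> x w. \<Sum>l<enum_pos x. Z $ enum_at l $ rot (cyc_diag x (cyc_succ w)) (enum_at l))"
  have "mcomm cyc_shift Y $ x $ z = Z $ x $ z" for x z
  proof -
    define f where "f l = Z $ enum_at l $ rot (cyc_diag x z) (enum_at l)" for l
    have left: "(cyc_shift ** Y) $ x $ z = (\<Sum>l<enum_pos (cyc_succ x). f l)"
      by (simp add: cyc_shift_mult Y_def f_def cyc_diag_cyc_succ)
    have right: "(Y ** cyc_shift) $ x $ z = (\<Sum>l<enum_pos x. f l)"
      by (simp add: mult_cyc_shift Y_def f_def)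
    have diag: "f (enum_pos x) = Z $ x $ z"
      by (simp add: f_def rot_cyc_diag)
    have total: "(\<Sum>l<CARD('k). f l) = 0"
      using assms cyc_diag_less[of x z] by (simp add: f_def cyc_diag_sum_def sum_UNIV_enum)
    show ?thesis
    proof (cases "Suc (enum_pos x) < CARD('k)")
      case True
      then show ?thesis
        by (simp add: mcomm_def left right diag cyc_succ_def enum_pos_rot)
    next
      case False
      then have "CARD('k) = Suc (enum_pos x)"
        using enum_pos_less[of x] by simp
      then show ?thesis
        using total by (simp add: mcomm_def left right diag cyc_succ_def enum_pos_rot add_eq_0_iff)
    qed
  qed
  then show ?thesis
    by (auto simp: vec_eq_iff)
qed

lemma commutator_cyc_shift_off_row:
  fixes Z :: "'a::ring_1^'k^'k::finite"
  shows "\<exists>Y. \<forall>x z. x \<noteq> r \<longrightarrow> mcomm cyc_shift Y $ x $ z = Z $ x $ z"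
proof -
  text \<open>Each cyclic diagonal meets row \<open>r\<close> exactly once, so correcting that row
    makes all diagonal sums vanish.\<close>
  define Z' :: "'a^'k^'k" where
    "Z' = (\<chi> x z. if x = r then Z $ x $ z - cyc_diag_sum (cyc_diag x z) Z else Z $ x $ z)"
  have "cyc_diag_sum d Z' = 0" if "d < CARD('k)" for d
  proof -
    have "cyc_diag_sum d Z' = (\<Sum>x\<in>UNIV. Z $ x $ rot d x - (if x = r then cyc_diag_sum d Z else 0))"
      unfolding cyc_diag_sum_def[of d Z'] by (rule sum.cong) (auto simp: Z'_def cyc_diag_rot that)
    also have "\<dots> = 0"
      by (simp add: sum_subtractf cyc_diag_sum_def)
    finally show ?thesis .
  qed
  then obtain Y where "mcomm cyc_shift Y = Z'"
    using commutator_cyc_shift_surj by blast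
  then show ?thesis
    by (intro exI[of _ Y]) (simp add: Z'_def)
qed

definition unit_mat :: "'m \<Rightarrow> 'n \<Rightarrow> ('a::zero_neq_one)^'n^'m" where
  "unit_mat a b = (\<chi> x z. if x = a \<and> z = b then 1 else 0)"

definition up_shift :: "('a::zero_neq_one)^'k^'k::finite" where
  "up_shift = (\<chi> x z. if enum_pos z = Suc (enum_pos x) then 1 else 0)"

definition pos_diag :: "('a::semiring_1)^'k^'k::finite" where
  "pos_diag = (\<chi> x z. if x = z then of_nat (enum_pos x) else 0)"

lemma transpose_unit_mat: "transpose (unit_mat a b) = unit_mat b a"
  by (auto simp: transpose_def unit_mat_def vec_eq_iff)

lemma unit_mat_mult:
  "(unit_mat a b ** Y) $ x $ z = (if x = a then Y $ b $ z else (0 :: 'a::semiring_1))"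
  by (cases "x = a") (simp_all add: unit_mat_def matrix_matrix_mult_def sum_mult_delta_left)

lemma mult_unit_mat:
  "(Y ** unit_mat a b) $ x $ z = (if z = b then Y $ x $ a else (0 :: 'a::semiring_1))"
  by (cases "z = b") (simp_all add: unit_mat_def matrix_matrix_mult_def sum_mult_delta_right)

lemma enum_pos_eq_Suc_iff:
  "enum_pos x = Suc (enum_pos w) \<longleftrightarrow> enum_pos x \<noteq> 0 \<and> w = enum_at (enum_pos x - 1)"
  for x w :: "'k::finite"
  using enum_pos_less[of x] by auto

lemma transpose_up_shift_mult:
  "(transpose up_shift ** Y) $ x $ z
    = (if enum_pos x = 0 then 0 else Y $ enum_at (enum_pos x - 1) $ z :: 'a::semiring_1)"
  by (cases "enum_pos x = 0")
    (simp_all add: up_shift_def transpose_def matrix_matrix_mult_def enum_pos_eq_Suc_iff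
      sum_mult_delta_left)

lemma pos_diag_mult: "(pos_diag ** Y) $ x $ z = of_nat (enum_pos x) * Y $ x $ z"
  by (simp add: pos_diag_def matrix_matrix_mult_def if_distrib[of "\<lambda>c. c * _"] cong: if_cong)

lemma mult_pos_diag: "(Y ** pos_diag) $ x $ z = Y $ x $ z * of_nat (enum_pos z)"
  by (simp add: pos_diag_def matrix_matrix_mult_def if_distrib[of "\<lambda>c. _ * c"] cong: if_cong)

lemma unit_mat_up_shift_partition:
  "unit_mat (enum_at 0) (enum_at 1) ** unit_mat (enum_at 1) (enum_at 0)
    + transpose up_shift ** up_shift = (mat 1 :: 'a::semiring_1^'k^'k::finite)"
proof -
  have "x = enum_at 0 \<longleftrightarrow> enum_pos x = 0" for x :: 'k
    by (metis enum_at_pos enum_pos_at zero_less_card_finite)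
  moreover have "enum_pos (enum_at (enum_pos x - 1) :: 'k) = enum_pos x - 1" for x :: 'k
    using enum_pos_less[of x] by simp
  ultimately show ?thesis
    by (simp add: vec_eq_iff unit_mat_mult transpose_up_shift_mult)
      (auto simp: mat_def unit_mat_def up_shift_def enum_pos_inject[symmetric])
qed

lemma mcomm_unit_mat: "a \<noteq> b \<Longrightarrow> mcomm (unit_mat a a) (unit_mat a b) = unit_mat a b"
  by (simp add: vec_eq_iff mcomm_def unit_mat_mult) (simp add: unit_mat_def)

lemma mcomm_pos_diag_transpose_up_shift: "mcomm pos_diag (transpose up_shift) = transpose up_shift"
  by (simp add: vec_eq_iff mcomm_def pos_diag_mult mult_pos_diag up_shift_def transpose_def)

lemma mcomm_up_shift_pos_diag: "mcomm up_shift pos_diag = up_shift"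
  by (simp add: vec_eq_iff mcomm_def pos_diag_mult mult_pos_diag up_shift_def)

lemma commutator_decomposition_left:
  fixes X :: "'a::ring_1^'k^'k::finite"
  assumes "2 \<le> CARD('k)"
  shows "\<exists>y1 y2. X = unit_mat (enum_at 0) (enum_at 1) ** mcomm cyc_shift y1
                    + transpose up_shift ** mcomm cyc_shift y2"
proof -
  define e0 e1 last :: 'k where "e0 = enum_at 0" and "e1 = enum_at 1"
    and "last = enum_at (CARD('k) - 1)"
  have "e0 \<noteq> e1"
    using enum_at_0_neq_1[OF assms] by (simp add: e0_def e1_def)
  obtain y1 where y1: "\<forall>x z. x \<noteq> e0 \<longrightarrow> mcomm cyc_shift y1 $ x $ z = (unit_mat e1 e0 ** X) $ x $ z"
    using commutator_cyc_shift_off_row by blast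
  obtain y2 where y2: "\<forall>x z. x \<noteq> last \<longrightarrow> mcomm cyc_shift y2 $ x $ z = (up_shift ** X) $ x $ z"
    using commutator_cyc_shift_off_row by blast
  have 1: "unit_mat e0 e1 ** mcomm cyc_shift y1 = unit_mat e0 e1 ** (unit_mat e1 e0 ** X)"
    by (rule matrix_mult_zero_column_cong[of _ e0])
      (use y1 \<open>e0 \<noteq> e1\<close> in \<open>auto simp: unit_mat_def\<close>)
  have "(transpose up_shift :: 'a^'k^'k) $ x $ last = 0" for x
    using enum_pos_less[of x] by (simp add: up_shift_def transpose_def last_def)
  then have 2: "transpose up_shift ** mcomm cyc_shift y2 = transpose up_shift ** (up_shift ** X)"
    by (rule matrix_mult_zero_column_cong) (use y2 in blast)
  have "X = (unit_mat e0 e1 ** unit_mat e1 e0 + transpose up_shift ** up_shift) ** X"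
    by (simp only: e0_def e1_def unit_mat_up_shift_partition matrix_mul_lid)
  also have "\<dots> = unit_mat e0 e1 ** mcomm cyc_shift y1 + transpose up_shift ** mcomm cyc_shift y2"
    by (simp add: 1 2 matrix_add_rdistrib matrix_mul_assoc)
  finally show ?thesis
    unfolding e0_def e1_def by blast
qed

lemma commutator_decomposition_right:
  fixes X :: "'a::ring_1^'k^'k::finite"
  assumes "2 \<le> CARD('k)"
  shows "\<exists>y1 y2. X = mcomm y1 (transpose cyc_shift) ** unit_mat (enum_at 1) (enum_at 0)
                    + mcomm y2 (transpose cyc_shift) ** up_shift"
proof -
  obtain y1 y2 where dec: "transpose X = unit_mat (enum_at 0) (enum_at 1) ** mcomm cyc_shift y1
      + transpose up_shift ** mcomm cyc_shift y2"
    using commutator_decomposition_left[OF assms] by blast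
  text \<open>The fixed matrices have entries \<open>0\<close> and \<open>1\<close>, which are central, so
    transposition still reverses products involving them.\<close>
  have "transpose (mcomm cyc_shift y) = mcomm (transpose y) (transpose cyc_shift)" for y :: "'a^'k^'k"
    by (simp add: mcomm_def transpose_diff transpose_matrix_mult_commuting cyc_shift_def)
  moreover have "transpose (unit_mat a b ** W) = transpose W ** unit_mat b a"
    for a b :: 'k and W :: "'a^'k^'k"
    by (subst transpose_matrix_mult_commuting) (simp_all add: transpose_unit_mat, simp add: unit_mat_def)
  moreover have "transpose (transpose up_shift ** W) = transpose W ** up_shift" for W :: "'a^'k^'k"
    by (subst transpose_matrix_mult_commuting) (simp_all, simp add: up_shift_def transpose_def)
  ultimately have "X = mcomm (transpose y1) (transpose cyc_shift) ** unit_mat (enum_at 1) (enum_at 0)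
      + mcomm (transpose y2) (transpose cyc_shift) ** up_shift"
    by (metis dec transpose_add transpose_transpose)
  then show ?thesis
    by blast
qed

section \<open>The ring \<open>\<M>(D, m, n, P)\<close>\<close>

lemma add_mem_sumN_2: "a \<in> S \<Longrightarrow> b \<in> S \<Longrightarrow> a + b \<in> sumN 2 S"
  unfolding sumN_def
  by (rule CollectI, rule exI[of _ "\<lambda>i. if i = 0 then a else b"]) (auto simp: numeral_2_eq_2)

lemma comm_product_mem_if_left_inverse:
  fixes P :: "'a::division_ring^'m^'n" and Q L :: "'a^'n^'m" and a b c c' y s :: "'a^'m^'m"
  assumes QP: "Q ** P = mat 1" and LP: "L ** P = 0" and cc': "c ** c' = mat 1"
  shows "mcomm a b ** (mcomm c y ** Q + s ** L) \<in> prod_set P (comm_set P) (comm_set P)"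
proof -
  have QPX: "Q ** (P ** X) = X" and LPX: "L ** (P ** X) = 0" and cc'X: "c ** (c' ** Z) = Z"
    for X :: "'a^'k^'m" and Z :: "'a^'k^'m"
    by (simp_all add: matrix_mul_assoc QP LP cc')
  have "scomm P (a ** Q) (b ** Q) = mcomm a b ** Q"
    by (simp add: scomm_def sprod_def mcomm_def matrix_diff_rdistrib matrix_mul_assoc[symmetric] QPX)
  moreover have "scomm P (c ** Q) (y ** Q + c' ** s ** L) = mcomm c y ** Q + s ** L"
    by (simp add: scomm_def sprod_def mcomm_def matrix_diff_rdistrib matrix_add_rdistrib
        matrix_add_ldistrib matrix_mul_assoc[symmetric] QPX LPX cc'X)
  moreover have "sprod P (mcomm a b ** Q) (mcomm c y ** Q + s ** L)
      = mcomm a b ** (mcomm c y ** Q + s ** L)"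
    by (simp add: sprod_def matrix_mul_assoc[symmetric] QPX)
  ultimately show ?thesis
    unfolding prod_set_def comm_set_def by (metis (mono_tags, lifting) mem_Collect_eq)
qed

lemma comm_product_mem_if_right_inverse:
  fixes P :: "'a::division_ring^'m^'n" and R L :: "'a^'n^'m" and a b c c' y s :: "'a^'n^'n"
  assumes PR: "P ** R = mat 1" and PL: "P ** L = 0" and c'c: "c' ** c = mat 1"
  shows "(R ** mcomm y c + L ** s) ** mcomm a b \<in> prod_set P (comm_set P) (comm_set P)"
proof -
  have PRX: "P ** (R ** X) = X" and PLX: "P ** (L ** X) = 0" and Zc'c: "Z ** (c' ** c) = Z"
    for X :: "'a^'k^'n" and Z :: "'a^'n^'j"
    by (simp_all add: matrix_mul_assoc PR PL c'c)
  have "scomm P (R ** y + L ** s ** c') (R ** c) = R ** mcomm y c + L ** s"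
    by (simp add: scomm_def sprod_def mcomm_def matrix_diff_ldistrib matrix_add_rdistrib
        matrix_add_ldistrib matrix_mul_assoc[symmetric] PRX PLX Zc'c)
  moreover have "scomm P (R ** a) (R ** b) = R ** mcomm a b"
    by (simp add: scomm_def sprod_def mcomm_def matrix_diff_ldistrib matrix_mul_assoc[symmetric] PRX)
  moreover have "sprod P (R ** mcomm y c + L ** s) (R ** mcomm a b)
      = (R ** mcomm y c + L ** s) ** mcomm a b"
    by (simp add: sprod_def matrix_add_rdistrib matrix_mul_assoc[symmetric] PRX PLX)
  ultimately show ?thesis
    unfolding prod_set_def comm_set_def by (metis (mono_tags, lifting) mem_Collect_eq)
qed

lemma sumN_2_comm_products_if_left_inverse:
  fixes P :: "'a::division_ring^'m^'n" and Q :: "'a^'n^'m"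
  assumes QP: "Q ** P = mat 1" and "2 \<le> CARD('m)"
  shows "A \<in> sumN 2 (prod_set P (comm_set P) (comm_set P))"
proof -
  define e0 e1 :: 'm where "e0 = enum_at 0" and "e1 = enum_at 1"
  define L where "L = A - (A ** P) ** Q"
  have LP: "L ** P = 0"
    by (simp add: L_def matrix_diff_rdistrib matrix_mul_assoc[symmetric] QP)
  obtain y1 y2 where dec: "A ** P = unit_mat e0 e1 ** mcomm cyc_shift y1
      + transpose up_shift ** mcomm cyc_shift y2"
    unfolding e0_def e1_def using commutator_decomposition_left[OF assms(2)] by blast
  have "A = (A ** P) ** Q + (unit_mat e0 e1 ** unit_mat e1 e0 + transpose up_shift ** up_shift) ** L"
    by (simp only: e0_def e1_def unit_mat_up_shift_partition) (simp add: L_def)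
  also have "\<dots> = unit_mat e0 e1 ** (mcomm cyc_shift y1 ** Q + unit_mat e1 e0 ** L)
      + transpose up_shift ** (mcomm cyc_shift y2 ** Q + up_shift ** L)"
    by (simp add: dec matrix_add_rdistrib matrix_add_ldistrib matrix_mul_assoc)
  also have "\<dots> = mcomm (unit_mat e0 e0) (unit_mat e0 e1)
        ** (mcomm cyc_shift y1 ** Q + unit_mat e1 e0 ** L)
      + mcomm pos_diag (transpose up_shift) ** (mcomm cyc_shift y2 ** Q + up_shift ** L)"
    using enum_at_0_neq_1[OF assms(2)]
    by (simp add: e0_def e1_def mcomm_unit_mat mcomm_pos_diag_transpose_up_shift)
  finally show ?thesis
    by (metis add_mem_sumN_2 comm_product_mem_if_left_inverse[OF QP LP cyc_shift_transpose])
qed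

lemma sumN_2_comm_products_if_right_inverse:
  fixes P :: "'a::division_ring^'m^'n" and R :: "'a^'n^'m"
  assumes PR: "P ** R = mat 1" and "2 \<le> CARD('n)"
  shows "A \<in> sumN 2 (prod_set P (comm_set P) (comm_set P))"
proof -
  define e0 e1 :: 'n where "e0 = enum_at 0" and "e1 = enum_at 1"
  define L where "L = A - R ** (P ** A)"
  have PL: "P ** L = 0"
    by (simp add: L_def matrix_diff_ldistrib matrix_mul_assoc PR)
  obtain y1 y2 where dec: "P ** A = mcomm y1 (transpose cyc_shift) ** unit_mat e1 e0
      + mcomm y2 (transpose cyc_shift) ** up_shift"
    unfolding e0_def e1_def using commutator_decomposition_right[OF assms(2)] by blast
  have "A = R ** (P ** A) + L ** (unit_mat e0 e1 ** unit_mat e1 e0 + transpose up_shift ** up_shift)"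
    by (simp only: e0_def e1_def unit_mat_up_shift_partition) (simp add: L_def)
  also have "\<dots> = (R ** mcomm y1 (transpose cyc_shift) + L ** unit_mat e0 e1) ** unit_mat e1 e0
      + (R ** mcomm y2 (transpose cyc_shift) + L ** transpose up_shift) ** up_shift"
    by (simp add: dec matrix_add_rdistrib matrix_add_ldistrib matrix_mul_assoc)
  also have "\<dots> = (R ** mcomm y1 (transpose cyc_shift) + L ** unit_mat e0 e1)
        ** mcomm (unit_mat e1 e1) (unit_mat e1 e0)
      + (R ** mcomm y2 (transpose cyc_shift) + L ** transpose up_shift) ** mcomm up_shift pos_diag"
    using enum_at_0_neq_1[OF assms(2)]
    by (simp add: e0_def e1_def mcomm_unit_mat mcomm_up_shift_pos_diag)
  finally show ?thesis
    by (metis add_mem_sumN_2 comm_product_mem_if_right_inverse[OF PR PL cyc_shift_transpose])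
qed

theorem theorem2p7:
  fixes P :: "('a::division_ring)^'m^'n"
  assumes "CARD('m) \<ge> 2" and "CARD('n) \<ge> 2"
    and "drank P = min CARD('m) CARD('n)"
  shows "sumN 2 (prod_set P (comm_set P) (comm_set P)) = (UNIV :: ('a^'n^'m) set)"
proof -
  obtain S where S: "left_indep_rows P S" "card S = min CARD('m) CARD('n)"
    using drank_attained assms(3) by metis
  have "A \<in> sumN 2 (prod_set P (comm_set P) (comm_set P))" for A
  proof (cases "CARD('m) \<le> CARD('n)")
    case True
    with S obtain Q where "Q ** P = mat 1"
      using left_inverse_if_left_indep_rows by fastforce
    then show ?thesis
      using assms(1) by (rule sumN_2_comm_products_if_left_inverse)
  next
    case False
    with S have "S = UNIV"
      by (simp add: card_eq_UNIV_imp_eq_UNIV)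
    with S obtain R where "P ** R = mat 1"
      using right_inverse_if_left_indep_rows by blast
    then show ?thesis
      using assms(2) by (rule sumN_2_comm_products_if_right_inverse)
  qed
  then show ?thesis
    by blast
qed

end
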